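(* Let $m\ge2$, $\lambda\in\mathbb{D}$, $\mathcal{D}=\{d_1,\ldots,d_m\}\subset\mathbb{C}$, and let $E=\{\sum_{n=0}^\infty a_n\lambda^n:a_n\in\mathcal{D}\}$ be the attractor of the IFS $\{f_j(z)=\lambda z+d_j\}_{j=1}^m$. If $E$ is post-critically finite and connected, then $E$ has bounded turning.
   Context: Let $E_j=f_j(E)$ and $\mathcal{O}=\bigcup_{i\ne j}(E_i\cap E_j)$ (the overlap set). Let $\pi:\mathcal{D}^{\mathbb{N}}\to E$, $\pi(\mathbf{a})=\sum_{n\ge0}a_n\lambda^n$. $E$ is post-critically finite if $\mathcal{O}$ is finite and every sequence in $\pi^{-1}(\mathcal{O})$ is eventually periodic. A connected set $X\subset\mathbb{C}$ has bounded turning if there is $L$ such that for all $z_0,z_1\in X$ there is a connected set $[z_0,z_1]\subset X$ containing $z_0,z_1$ with $\operatorname{diam}[z_0,z_1]\le L|z_0-z_1|$. *)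

theory Defs
  imports "HOL-Analysis.Analysis"
begin

definition coding :: "complex \<Rightarrow> (nat \<Rightarrow> complex) \<Rightarrow> complex" where
  "coding lam a = (\<Sum>n. a n * lam ^ n)"

definition attractor :: "complex \<Rightarrow> complex set \<Rightarrow> complex set" where
  "attractor lam D = {coding lam a | a. \<forall>n. a n \<in> D}"

definition overlap_set :: "complex \<Rightarrow> complex set \<Rightarrow> complex set" where
  "overlap_set lam D = (\<Union>d\<in>D. \<Union>d'\<in>D - {d}.
      ((\<lambda>z. lam * z + d) ` attractor lam D) \<inter> ((\<lambda>z. lam * z + d') ` attractor lam D))"

definition eventually_periodic :: "(nat \<Rightarrow> 'a) \<Rightarrow> bool" where
  "eventually_periodic a = (\<exists>N p. p > 0 \<and> (\<forall>n\<ge>N. a (n + p) = a n))"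

definition post_critically_finite :: "complex \<Rightarrow> complex set \<Rightarrow> bool" where
  "post_critically_finite lam D \<longleftrightarrow>
     finite (overlap_set lam D) \<and>
     (\<forall>a. (\<forall>n. a n \<in> D) \<and> coding lam a \<in> overlap_set lam D \<longrightarrow> eventually_periodic a)"

definition bounded_turning :: "complex set \<Rightarrow> bool" where
  "bounded_turning X \<longleftrightarrow> (\<exists>L. \<forall>z0\<in>X. \<forall>z1\<in>X. \<exists>C. C \<subseteq> X \<and> connected C \<and>
      z0 \<in> C \<and> z1 \<in> C \<and> diameter C \<le> L * dist z0 z1)"

end

theory Submission
  imports Defs
begin

text \<open>For a digit sequence \<open>a\<close>, the \<open>n\<close>-cell \<open>f\<^bsub>a 0\<^esub> \<circ> \<dots> \<circ> f\<^bsub>a (n-1)\<^esub> (E)\<close> is a copy of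
  \<open>E\<close> scaled by \<open>\<lambda>\<^sup>n\<close>. Two \<open>n\<close>-cells meet iff their normalised offset, the neighbour type,
  lies in \<open>E - E\<close>; post-critical finiteness forces the neighbour types of meeting cells into
  the finite set of differences of tails of codings of overlap points. Hence the neighbour types
  of disjoint \<open>n\<close>-cells whose parents meet lie in a finite set at positive distance \<open>c\<close> from the
  compact set \<open>E - E\<close>, and by induction on \<open>n\<close> disjoint \<open>n\<close>-cells are at distance at least
  \<open>c |\<lambda>|\<^sup>n\<close>. So if \<open>c |\<lambda>|\<^sup>n\<^sup>+\<^sup>1 \<le> |z\<^sub>0 - z\<^sub>1| < c |\<lambda>|\<^sup>n\<close>, the \<open>n\<close>-cells containing \<open>z\<^sub>0\<close> and
  \<open>z\<^sub>1\<close> meet, and their union is a connected subset of \<open>E\<close> of diameter at most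
  \<open>2 |\<lambda>|\<^sup>n diam E\<close>, which is a bounded multiple of \<open>|z\<^sub>0 - z\<^sub>1|\<close>.\<close>

lemma tendsto_finite_range_eventually_eq:
  fixes f :: "'b \<Rightarrow> 'a::t1_space"
  assumes "finite S" and "\<And>x. f x \<in> S" and "(f \<longlongrightarrow> l) F"
  shows "eventually (\<lambda>x. f x = l) F"
proof -
  have "open (- (S - {l}))"
    using assms(1) by (intro open_Compl finite_imp_closed) simp
  moreover have "l \<in> - (S - {l})" by simp
  ultimately have "eventually (\<lambda>x. f x \<in> - (S - {l})) F"
    by (rule topological_tendstoD[OF assms(3)])
  then show ?thesis
    by (rule eventually_mono) (use assms(2) in auto)
qed

lemma subseq_agrees_on_prefixes:
  fixes c :: "nat \<Rightarrow> nat \<Rightarrow> 'a::metric_space"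
  assumes "finite D" and "\<And>k n. c k n \<in> D"
  obtains r \<alpha> where "strict_mono r" and "\<forall>n. \<alpha> n \<in> D"
    and "\<And>L. eventually (\<lambda>k. \<forall>i<L. c (r k) i = \<alpha> i) sequentially"
proof -
  have "compactin (product_topology (\<lambda>_. euclidean) UNIV) (PiE UNIV (\<lambda>_::nat. D))"
    using assms(1) by (simp add: compactin_PiE finite_imp_compact)
  then have "seq_compact {a::nat \<Rightarrow> 'a. \<forall>n. a n \<in> D}"
    by (intro compact_imp_seq_compact)
      (simp add: euclidean_product_topology PiE_UNIV_domain Pi_def)
  moreover have "\<forall>k. c k \<in> {a. \<forall>n. a n \<in> D}" using assms(2) by simp
  ultimately obtain \<alpha> r where \<alpha>: "\<alpha> \<in> {a. \<forall>n. a n \<in> D}" and r: "strict_mono r"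
    and lim: "(c \<circ> r) \<longlonglongrightarrow> \<alpha>"
    unfolding seq_compact_def by meson
  have coord: "eventually (\<lambda>k. c (r k) i = \<alpha> i) sequentially" for i
  proof -
    have "continuous_on UNIV (\<lambda>x::nat \<Rightarrow> 'a. x i)"
      by (rule continuous_on_product_coordinates)
    then have "isCont (\<lambda>x::nat \<Rightarrow> 'a. x i) \<alpha>"
      using continuous_on_eq_continuous_at[OF open_UNIV] by blast
    then have "(\<lambda>k. c (r k) i) \<longlonglongrightarrow> \<alpha> i"
      using isCont_tendsto_compose[OF _ lim] by (simp add: o_def)
    then show ?thesis
      by (rule tendsto_finite_range_eventually_eq[OF assms(1) assms(2)])
  qed
  have "eventually (\<lambda>k. \<forall>i<L. c (r k) i = \<alpha> i) sequentially" for L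
  proof (induction L)
    case (Suc L)
    from eventually_conj[OF Suc coord[of L]] show ?case
      by eventually_elim (auto simp: less_Suc_eq)
  qed simp
  then show ?thesis using that \<alpha> r by simp
qed

definition shift_seq :: "(nat \<Rightarrow> 'a) \<Rightarrow> nat \<Rightarrow> nat \<Rightarrow> 'a" where
  "shift_seq a m = (\<lambda>i. a (i + m))"

definition splice_seq :: "(nat \<Rightarrow> 'a) \<Rightarrow> nat \<Rightarrow> (nat \<Rightarrow> 'a) \<Rightarrow> nat \<Rightarrow> 'a" where
  "splice_seq a n g = (\<lambda>i. if i < n then a i else g (i - n))"

lemma shift_seq_shift_seq: "shift_seq (shift_seq a i) j = shift_seq a (j + i)"
  by (simp add: shift_seq_def add.assoc)

lemma shift_seq_splice_seq: "shift_seq (splice_seq a n g) n = g"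
  by (simp add: shift_seq_def splice_seq_def)

lemma shift_seq_in: "\<forall>n. a n \<in> D \<Longrightarrow> \<forall>n. shift_seq a m n \<in> D"
  by (simp add: shift_seq_def)

lemma splice_seq_in: "\<forall>n. a n \<in> D \<Longrightarrow> \<forall>n. g n \<in> D \<Longrightarrow> \<forall>n. splice_seq a m g n \<in> D"
  by (simp add: splice_seq_def)

lemma first_difference:
  fixes a b :: "nat \<Rightarrow> 'a"
  assumes "\<exists>i<n. a i \<noteq> b i"
  obtains i where "i < n" "a i \<noteq> b i" "\<forall>j<i. a j = b j"
proof -
  obtain i where "i < n \<and> a i \<noteq> b i" "\<forall>j<i. \<not> (j < n \<and> a j \<noteq> b j)"
    using assms exists_least_iff[of "\<lambda>i. i < n \<and> a i \<noteq> b i"] by blast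
  then show ?thesis using that by force
qed

lemma eventually_periodic_finite_shifts:
  assumes "eventually_periodic \<alpha>"
  shows "finite (range (shift_seq \<alpha>))"
proof -
  obtain N p where p: "p > 0" "\<forall>n\<ge>N. \<alpha> (n + p) = \<alpha> n"
    using assms unfolding eventually_periodic_def by blast
  have periodic: "\<alpha> (n + k * p) = \<alpha> n" if "n \<ge> N" for n k
  proof (induction k)
    case (Suc k)
    have "\<alpha> (n + Suc k * p) = \<alpha> ((n + k * p) + p)" by (simp add: algebra_simps)
    also have "\<dots> = \<alpha> (n + k * p)" using p(2) that by simp
    finally show ?case using Suc by simp
  qed simp
  have "shift_seq \<alpha> m \<in> shift_seq \<alpha> ` {..<N + p}" for m
  proof (cases "m < N + p")
    case False
    define m' where "m' = N + (m - N) mod p"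
    have m: "m = m' + ((m - N) div p) * p"
      using mod_div_mult_eq[of "m - N" p] False unfolding m'_def by linarith
    have "shift_seq \<alpha> m = shift_seq \<alpha> m'"
    proof
      fix i
      have "shift_seq \<alpha> m i = \<alpha> ((i + m') + ((m - N) div p) * p)"
        unfolding shift_seq_def by (subst m) (simp add: algebra_simps)
      also have "\<dots> = \<alpha> (i + m')" by (rule periodic) (simp add: m'_def)
      finally show "shift_seq \<alpha> m i = shift_seq \<alpha> m' i" by (simp add: shift_seq_def)
    qed
    moreover have "m' < N + p" using p(1) unfolding m'_def by simp
    ultimately show ?thesis by blast
  qed blast
  then have "range (shift_seq \<alpha>) \<subseteq> shift_seq \<alpha> ` {..<N + p}" by blast
  then show ?thesis using finite_subset by blast
qed

lemma diameter_Un_le: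
  fixes A B :: "'a::real_normed_vector set"
  assumes A: "bounded A" and B: "bounded B" and "A \<inter> B \<noteq> {}"
  shows "diameter (A \<union> B) \<le> diameter A + diameter B"
proof (rule diameter_le)
  obtain p where p: "p \<in> A" "p \<in> B" using assms(3) by blast
  have dA: "dist x y \<le> diameter A" if "x \<in> A" "y \<in> A" for x y
    using diameter_bounded_bound[OF A that] .
  have dB: "dist x y \<le> diameter B" if "x \<in> B" "y \<in> B" for x y
    using diameter_bounded_bound[OF B that] .
  have "dist x y \<le> diameter A + diameter B" if xy: "x \<in> A \<union> B" "y \<in> A \<union> B" for x y
  proof -
    have tri: "dist x y \<le> dist x p + dist p y" "dist x y \<le> dist y p + dist p x"
      using dist_triangle[of x y p] dist_triangle[of y x p] by (simp_all add: dist_commute)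
    consider "x \<in> A" "y \<in> A" | "x \<in> B" "y \<in> B" | "x \<in> A" "y \<in> B" | "x \<in> B" "y \<in> A"
      using xy by blast
    then show ?thesis
      using dA dB p tri diameter_ge_0[OF A] diameter_ge_0[OF B]
      by cases (smt (verit))+
  qed
  then show "norm (x - y) \<le> diameter A + diameter B" if "x \<in> A \<union> B" "y \<in> A \<union> B" for x y
    using that by (simp add: dist_norm)
qed (use assms(3) in blast)

lemma geometric_bracket:
  fixes \<rho> c \<delta> :: real
  assumes "0 < \<rho>" "\<rho> < 1" "0 < \<delta>" "\<delta> < c"
  obtains n where "c * \<rho> ^ Suc n \<le> \<delta>" "\<delta> < c * \<rho> ^ n"
proof -
  have "(\<lambda>n. c * \<rho> ^ n) \<longlonglongrightarrow> c * 0"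
    by (intro tendsto_intros) (use assms in auto)
  then have "eventually (\<lambda>n. c * \<rho> ^ n < \<delta>) sequentially"
    using assms(3) by (simp add: order_tendsto_iff)
  then have ex: "\<exists>N. c * \<rho> ^ N \<le> \<delta>"
    by (auto simp: eventually_sequentially intro: less_imp_le)
  define N where "N = (LEAST N. c * \<rho> ^ N \<le> \<delta>)"
  have N: "c * \<rho> ^ N \<le> \<delta>"
    unfolding N_def by (rule LeastI_ex[OF ex])
  then obtain n where n: "N = Suc n"
    using assms(4) by (cases N) auto
  have "\<not> c * \<rho> ^ n \<le> \<delta>"
    unfolding N_def by (rule not_less_Least) (simp add: N_def[symmetric] n)
  then show ?thesis using that N n by simp
qed

lemma coding_0: "coding 0 a = a 0"
proof -
  have "(\<lambda>n. a n * 0 ^ n) = (\<lambda>n. if n = 0 then a n else 0)"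
    by (auto simp: fun_eq_iff)
  then have "(\<lambda>n. a n * 0 ^ n) sums a 0"
    using sums_single[of 0 a] by simp
  then show ?thesis
    unfolding coding_def by (rule sums_unique[symmetric])
qed

lemma attractor_0: "attractor 0 D = D"
proof -
  have "D \<subseteq> attractor 0 D"
    by (auto simp: attractor_def coding_0 intro!: exI[of _ "\<lambda>_. _"])
  then show ?thesis
    by (auto simp: attractor_def coding_0)
qed

locale digit_ifs =
  fixes lam :: complex and D :: "complex set"
  assumes contraction: "norm lam < 1" and finite_digits: "finite D"
begin

abbreviation E :: "complex set" where
  "E \<equiv> attractor lam D"

definition partial_coding :: "(nat \<Rightarrow> complex) \<Rightarrow> nat \<Rightarrow> complex" where
  "partial_coding a n = (\<Sum>i<n. a i * lam ^ i)"

text \<open>\<open>cell a n = f\<^bsub>a 0\<^esub> \<circ> \<dots> \<circ> f\<^bsub>a (n-1)\<^esub>\<close>, so \<open>cell a n ` E\<close> is an \<open>n\<close>-cell of \<open>E\<close>.\<close>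
definition cell :: "(nat \<Rightarrow> complex) \<Rightarrow> nat \<Rightarrow> complex \<Rightarrow> complex" where
  "cell a n z = partial_coding a n + lam ^ n * z"

lemma cell_cong: "\<forall>i<n. a i = b i \<Longrightarrow> cell a n = cell b n"
  by (simp add: cell_def partial_coding_def fun_eq_iff)

lemma cell_Suc: "cell a (Suc n) z = cell a n (a n + lam * z)"
  by (simp add: cell_def partial_coding_def algebra_simps)

lemma cell_eq_iff: "lam \<noteq> 0 \<Longrightarrow> cell a n z = cell a n w \<longleftrightarrow> z = w"
  by (simp add: cell_def)

lemma in_attractorE:
  assumes "z \<in> E"
  obtains a where "\<forall>n. a n \<in> D" "z = coding lam a"
  using assms by (auto simp: attractor_def)

lemma coding_in_attractor: "\<forall>n. a n \<in> D \<Longrightarrow> coding lam a \<in> E"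
  by (auto simp: attractor_def)

lemma digit_norm_bound:
  obtains M where "M \<ge> 0" "\<And>d. d \<in> D \<Longrightarrow> norm d \<le> M"
proof -
  obtain M where "\<forall>d\<in>D. norm d \<le> M"
    using finite_imp_bounded[OF finite_digits] bounded_iff by blast
  then show ?thesis using that[of "max M 0"] by force
qed

lemma summable_coding:
  assumes "\<forall>n. a n \<in> D"
  shows "summable (\<lambda>n. a n * lam ^ n)"
proof -
  obtain M where M: "M \<ge> 0" "\<And>d. d \<in> D \<Longrightarrow> norm d \<le> M"
    using digit_norm_bound by blast
  have "summable (\<lambda>n. M * norm lam ^ n)"
    using contraction by (intro summable_mult summable_geometric) simp
  then show ?thesis
    by (rule summable_comparison_test'[of _ 0])
      (use M assms in \<open>auto simp: norm_mult norm_power intro!: mult_right_mono\<close>)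
qed

lemma coding_norm_bound:
  obtains B where "B \<ge> 0" "\<And>a. \<forall>n. a n \<in> D \<Longrightarrow> norm (coding lam a) \<le> B"
proof -
  obtain M where M: "M \<ge> 0" "\<And>d. d \<in> D \<Longrightarrow> norm d \<le> M"
    using digit_norm_bound by blast
  have geom: "summable (\<lambda>n. M * norm lam ^ n)"
    using contraction by (intro summable_mult summable_geometric) simp
  have "(\<Sum>n. M * norm lam ^ n) \<ge> 0"
    using geom M by (intro suminf_nonneg) auto
  moreover have "norm (coding lam a) \<le> (\<Sum>n. M * norm lam ^ n)" if "\<forall>n. a n \<in> D" for a
    unfolding coding_def
    by (rule norm_suminf_le[OF _ geom])
      (use M that in \<open>auto simp: norm_mult norm_power intro!: mult_right_mono\<close>)
  ultimately show ?thesis by (rule that)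
qed

lemma coding_eq_cell_shift:
  assumes a: "\<forall>n. a n \<in> D"
  shows "coding lam a = cell a n (coding lam (shift_seq a n))"
proof -
  have "summable (\<lambda>i. a i * lam ^ i)" using summable_coding[OF a] .
  then have "coding lam a = (\<Sum>i. a (i + n) * lam ^ (i + n)) + partial_coding a n"
    unfolding coding_def partial_coding_def by (rule suminf_split_initial_segment)
  also have "(\<Sum>i. a (i + n) * lam ^ (i + n)) = (\<Sum>i. lam ^ n * (shift_seq a n i * lam ^ i))"
    by (simp add: shift_seq_def power_add algebra_simps)
  also have "\<dots> = lam ^ n * coding lam (shift_seq a n)"
    unfolding coding_def by (rule suminf_mult[OF summable_coding[OF shift_seq_in[OF a]]])
  finally show ?thesis by (simp add: cell_def)
qed

lemma coding_first_digit:
  "\<forall>n. a n \<in> D \<Longrightarrow> coding lam a = a 0 + lam * coding lam (shift_seq a 1)"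
  using coding_eq_cell_shift[of a 1] by (simp add: cell_def partial_coding_def)

lemma coding_splice_seq:
  assumes "\<forall>n. a n \<in> D" "\<forall>n. g n \<in> D"
  shows "coding lam (splice_seq a n g) = cell a n (coding lam g)"
proof -
  have "cell (splice_seq a n g) n = cell a n"
    by (rule cell_cong) (simp add: splice_seq_def)
  then show ?thesis
    using coding_eq_cell_shift[OF splice_seq_in[OF assms], of n n]
    by (simp add: shift_seq_splice_seq)
qed

lemma cell_in_attractor:
  assumes a: "\<forall>n. a n \<in> D" and z: "z \<in> E"
  shows "cell a n z \<in> E"
proof -
  obtain g where g: "\<forall>n. g n \<in> D" "z = coding lam g"
    using z by (rule in_attractorE)
  then show ?thesis
    using coding_splice_seq[OF a g(1)] coding_in_attractor[OF splice_seq_in[OF a g(1)]] by simp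
qed

lemma digit_step_in_attractor: "d \<in> D \<Longrightarrow> z \<in> E \<Longrightarrow> d + lam * z \<in> E"
  using cell_in_attractor[of "\<lambda>_. d" z 1] by (simp add: cell_def partial_coding_def)

lemma coding_in_cell:
  assumes a: "\<forall>n. a n \<in> D"
  shows "coding lam a \<in> cell a n ` E"
proof -
  have "coding lam (shift_seq a n) \<in> E"
    by (rule coding_in_attractor[OF shift_seq_in[OF a]])
  then show ?thesis
    by (subst coding_eq_cell_shift[OF a, of n]) (rule imageI)
qed

lemma coding_dist_le_agreeing:
  obtains B where "B \<ge> 0" "\<And>a b L. \<forall>n. a n \<in> D \<Longrightarrow> \<forall>n. b n \<in> D \<Longrightarrow> \<forall>i<L. a i = b i \<Longrightarrow>
      norm (coding lam a - coding lam b) \<le> norm lam ^ L * B"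
proof -
  obtain B where B: "B \<ge> 0" "\<And>a. \<forall>n. a n \<in> D \<Longrightarrow> norm (coding lam a) \<le> B"
    using coding_norm_bound by blast
  have "norm (coding lam a - coding lam b) \<le> norm lam ^ L * (2 * B)"
    if a: "\<forall>n. a n \<in> D" and b: "\<forall>n. b n \<in> D" and agree: "\<forall>i<L. a i = b i" for a b L
  proof -
    have "coding lam a - coding lam b = lam ^ L * (coding lam (shift_seq a L) - coding lam (shift_seq b L))"
      using coding_eq_cell_shift[OF a, of L] coding_eq_cell_shift[OF b, of L] cell_cong[OF agree]
      by (simp add: cell_def algebra_simps)
    moreover have "norm (coding lam (shift_seq a L) - coding lam (shift_seq b L)) \<le> 2 * B"
      using norm_triangle_ineq4[of "coding lam (shift_seq a L)" "coding lam (shift_seq b L)"]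
        B(2)[OF shift_seq_in[OF a, where m = L]] B(2)[OF shift_seq_in[OF b, where m = L]]
      by linarith
    ultimately show ?thesis
      by (simp add: norm_mult norm_power mult_left_mono)
  qed
  then show ?thesis using that[of "2 * B"] B(1) by simp
qed

lemma coding_tendsto_agreeing:
  assumes "\<And>k. \<forall>n. c k n \<in> D" "\<forall>n. \<alpha> n \<in> D"
    and agree: "\<And>L. eventually (\<lambda>k. \<forall>i<L. c k i = \<alpha> i) F"
  shows "((\<lambda>k. coding lam (c k)) \<longlongrightarrow> coding lam \<alpha>) F"
proof (rule tendstoI)
  fix e :: real assume "e > 0"
  obtain B where B: "B \<ge> 0" "\<And>a b L. \<forall>n. a n \<in> D \<Longrightarrow> \<forall>n. b n \<in> D \<Longrightarrow> \<forall>i<L. a i = b i \<Longrightarrow>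
      norm (coding lam a - coding lam b) \<le> norm lam ^ L * B"
    using coding_dist_le_agreeing by blast
  have "(\<lambda>L. norm lam ^ L * B) \<longlonglongrightarrow> 0 * B"
    by (intro tendsto_intros) (use contraction in auto)
  then have "eventually (\<lambda>L. norm lam ^ L * B < e) sequentially"
    using \<open>e > 0\<close> by (simp add: order_tendsto_iff)
  then obtain L where L: "norm lam ^ L * B < e"
    by (auto simp: eventually_sequentially)
  show "eventually (\<lambda>k. dist (coding lam (c k)) (coding lam \<alpha>) < e) F"
    using agree[of L]
  proof eventually_elim
    case (elim k)
    have "norm (coding lam (c k) - coding lam \<alpha>) \<le> norm lam ^ L * B"
      by (rule B(2)[OF assms(1,2) elim])
    then show ?case using L by (simp add: dist_norm)
  qed
qed

lemma compact_attractor: "compact E"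
proof -
  have "\<exists>l\<in>E. \<exists>r. strict_mono r \<and> (f \<circ> r) \<longlonglongrightarrow> l" if f: "\<forall>n. f n \<in> E" for f :: "nat \<Rightarrow> complex"
  proof -
    obtain c where c: "\<And>k. \<forall>n. c k n \<in> D" "\<And>k. f k = coding lam (c k)"
      using f unfolding attractor_def by (simp add: mem_Collect_eq) metis
    obtain r \<alpha> where r: "strict_mono r" and \<alpha>: "\<forall>n. \<alpha> n \<in> D"
      and agree: "\<And>L. eventually (\<lambda>k. \<forall>i<L. c (r k) i = \<alpha> i) sequentially"
      using subseq_agrees_on_prefixes[OF finite_digits, of c] c(1) by blast
    have "(f \<circ> r) \<longlonglongrightarrow> coding lam \<alpha>"
      using coding_tendsto_agreeing[of "\<lambda>k. c (r k)", OF c(1) \<alpha> agree] by (simp add: o_def c(2))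
    then show ?thesis
      using r coding_in_attractor[OF \<alpha>] by blast
  qed
  then show ?thesis
    by (simp add: compact_eq_seq_compact_metric seq_compact_def)
qed

lemma coding_shift_eq:
  assumes "lam \<noteq> 0" "\<forall>n. a n \<in> D" "\<forall>n. b n \<in> D"
    and "coding lam a = coding lam b" and "\<forall>i<n. a i = b i"
  shows "coding lam (shift_seq a n) = coding lam (shift_seq b n)"
proof -
  have "cell a n (coding lam (shift_seq a n)) = cell a n (coding lam (shift_seq b n))"
    using assms(4) coding_eq_cell_shift[OF assms(2), of n] coding_eq_cell_shift[OF assms(3), of n]
      cell_cong[OF assms(5)] by simp
  then show ?thesis using cell_eq_iff[OF assms(1)] by blast
qed

lemma coding_in_overlap_set:
  assumes a: "\<forall>n. a n \<in> D" and b: "\<forall>n. b n \<in> D"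
    and eq: "coding lam a = coding lam b" and "a 0 \<noteq> b 0"
  shows "coding lam a \<in> overlap_set lam D"
proof -
  have "coding lam a \<in> (\<lambda>z. lam * z + a 0) ` E"
    by (rule image_eqI[OF _ coding_in_attractor[OF shift_seq_in[OF a, where m = 1]]])
      (simp add: coding_first_digit[OF a] add.commute)
  moreover have "coding lam a \<in> (\<lambda>z. lam * z + b 0) ` E"
    by (rule image_eqI[OF _ coding_in_attractor[OF shift_seq_in[OF b, where m = 1]]])
      (simp add: eq coding_first_digit[OF b] add.commute)
  ultimately show ?thesis
    unfolding overlap_set_def using a b \<open>a 0 \<noteq> b 0\<close> by blast
qed

lemma overlap_at_first_difference:
  assumes "lam \<noteq> 0" and a: "\<forall>n. a n \<in> D" and b: "\<forall>n. b n \<in> D"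
    and eq: "coding lam a = coding lam b" and "\<forall>j<i. a j = b j" and "a i \<noteq> b i"
  shows "coding lam (shift_seq a i) = coding lam (shift_seq b i)"
    and "coding lam (shift_seq a i) \<in> overlap_set lam D"
proof -
  show tail: "coding lam (shift_seq a i) = coding lam (shift_seq b i)"
    by (rule coding_shift_eq) fact+
  show "coding lam (shift_seq a i) \<in> overlap_set lam D"
    by (rule coding_in_overlap_set[OF shift_seq_in[OF a] shift_seq_in[OF b] tail])
      (simp add: shift_seq_def \<open>a i \<noteq> b i\<close>)
qed

text \<open>Cutting the tails at the first return to the overlap set is what makes this set finite.\<close>
definition post_critical_set :: "complex set" where
  "post_critical_set = {coding lam (shift_seq c m) | c m. (\<forall>n. c n \<in> D)
     \<and> coding lam c \<in> overlap_set lam D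
     \<and> (\<forall>i. 0 < i \<and> i < m \<longrightarrow> coding lam (shift_seq c i) \<notin> overlap_set lam D)}"

lemma shift_coding_in_post_critical_set:
  assumes "\<forall>n. c n \<in> D" "coding lam c \<in> overlap_set lam D"
  shows "coding lam (shift_seq c m) \<in> post_critical_set"
  using assms
proof (induction m arbitrary: c rule: less_induct)
  case (less m)
  show ?case
  proof (cases "\<exists>i. 0 < i \<and> i < m \<and> coding lam (shift_seq c i) \<in> overlap_set lam D")
    case True
    then obtain i where i: "0 < i" "i < m" "coding lam (shift_seq c i) \<in> overlap_set lam D"
      by blast
    have "coding lam (shift_seq (shift_seq c i) (m - i)) \<in> post_critical_set"
      using less.IH[of "m - i" "shift_seq c i"] i shift_seq_in[OF less.prems(1)] by simp
    then show ?thesis using i by (simp add: shift_seq_shift_seq)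
  next
    case False
    then show ?thesis using less.prems unfolding post_critical_set_def by blast
  qed
qed

lemma shift_coding_eq_before_overlap:
  assumes "lam \<noteq> 0" and c: "\<forall>n. c n \<in> D" and \<alpha>: "\<forall>n. \<alpha> n \<in> D"
    and eq: "coding lam c = coding lam \<alpha>" and "c 0 = \<alpha> 0"
    and no_return: "\<forall>i. 0 < i \<and> i < m \<longrightarrow> coding lam (shift_seq c i) \<notin> overlap_set lam D"
  shows "coding lam (shift_seq c m) = coding lam (shift_seq \<alpha> m)"
proof (cases "\<exists>i<m. c i \<noteq> \<alpha> i")
  case True
  then obtain i where i: "i < m" "c i \<noteq> \<alpha> i" "\<forall>j<i. c j = \<alpha> j"
    by (rule first_difference)
  then have "coding lam (shift_seq c i) \<in> overlap_set lam D"
    using overlap_at_first_difference(2)[OF \<open>lam \<noteq> 0\<close> c \<alpha> eq] by blast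
  moreover have "0 < i" using i(2) \<open>c 0 = \<alpha> 0\<close> by (cases i) auto
  ultimately show ?thesis using no_return i(1) by blast
next
  case False
  then show ?thesis using coding_shift_eq[OF \<open>lam \<noteq> 0\<close> c \<alpha> eq] by blast
qed

lemma finite_post_critical_set:
  assumes pcf: "post_critically_finite lam D" and "lam \<noteq> 0"
  shows "finite post_critical_set"
proof (rule ccontr)
  let ?O = "overlap_set lam D"
  have finite_O: "finite ?O" using pcf unfolding post_critically_finite_def by blast
  assume "infinite post_critical_set"
  then obtain y :: "nat \<Rightarrow> complex" where y: "inj y" "range y \<subseteq> post_critical_set"
    using infinite_countable_subset by blast
  have "\<forall>k. \<exists>c m. (\<forall>n. c n \<in> D) \<and> coding lam c \<in> ?O
     \<and> (\<forall>i. 0 < i \<and> i < m \<longrightarrow> coding lam (shift_seq c i) \<notin> ?O) \<and> y k = coding lam (shift_seq c m)"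
    using y(2) unfolding post_critical_set_def by blast
  then obtain c :: "nat \<Rightarrow> nat \<Rightarrow> complex" and m :: "nat \<Rightarrow> nat" where
    c: "\<And>k. \<forall>n. c k n \<in> D" "\<And>k. coding lam (c k) \<in> ?O"
       "\<And>k. \<forall>i. 0 < i \<and> i < m k \<longrightarrow> coding lam (shift_seq (c k) i) \<notin> ?O"
       "\<And>k. y k = coding lam (shift_seq (c k) (m k))"
    by metis
  obtain r \<alpha> where r: "strict_mono r" and \<alpha>: "\<forall>n. \<alpha> n \<in> D"
    and agree: "\<And>L. eventually (\<lambda>k. \<forall>i<L. c (r k) i = \<alpha> i) sequentially"
    using subseq_agrees_on_prefixes[OF finite_digits, of c] c(1) by blast
  have "(\<lambda>k. coding lam (c (r k))) \<longlonglongrightarrow> coding lam \<alpha>"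
    by (rule coding_tendsto_agreeing[OF c(1) \<alpha> agree])
  then have "eventually (\<lambda>k. coding lam (c (r k)) = coding lam \<alpha>) sequentially"
    by (rule tendsto_finite_range_eventually_eq[OF finite_O c(2)])
  from eventually_conj[OF this agree[of 1]] obtain K where
    K: "\<And>k. k \<ge> K \<Longrightarrow> coding lam (c (r k)) = coding lam \<alpha> \<and> c (r k) 0 = \<alpha> 0"
    by (auto simp: eventually_sequentially)
  have "coding lam \<alpha> \<in> ?O" using K[of K] c(2)[of "r K"] by simp
  then have "eventually_periodic \<alpha>" using pcf \<alpha> unfolding post_critically_finite_def by blast
  then have "finite (coding lam ` range (shift_seq \<alpha>))"
    using eventually_periodic_finite_shifts by blast
  moreover have "(y \<circ> r) ` {K..} \<subseteq> coding lam ` range (shift_seq \<alpha>)"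
  proof clarify
    fix k assume "k \<ge> K"
    then have "y (r k) = coding lam (shift_seq \<alpha> (m (r k)))"
      using shift_coding_eq_before_overlap[OF \<open>lam \<noteq> 0\<close> c(1) \<alpha> _ _ c(3)] K c(4) by metis
    then show "(y \<circ> r) k \<in> coding lam ` range (shift_seq \<alpha>)" by simp
  qed
  ultimately have "finite ((y \<circ> r) ` {K..})" by (rule finite_subset[rotated])
  moreover have "inj_on (y \<circ> r) {K..}"
    using inj_compose[OF y(1) strict_mono_imp_inj_on[OF r]] by (rule inj_on_subset) simp
  ultimately show False
    using finite_imageD infinite_Ici by blast
qed

definition neighbour_type :: "(nat \<Rightarrow> complex) \<Rightarrow> (nat \<Rightarrow> complex) \<Rightarrow> nat \<Rightarrow> complex" where
  "neighbour_type a b n = (partial_coding b n - partial_coding a n) / lam ^ n"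

definition difference_set :: "complex set" where
  "difference_set = {x - y | x y. x \<in> E \<and> y \<in> E}"

lemma cell_diff:
  "lam \<noteq> 0 \<Longrightarrow> cell a n z - cell b n w = lam ^ n * ((z - w) - neighbour_type a b n)"
  by (simp add: cell_def neighbour_type_def field_simps)

lemma neighbour_type_Suc:
  "lam \<noteq> 0 \<Longrightarrow> neighbour_type a b (Suc n) = (neighbour_type a b n + (b n - a n)) / lam"
  by (simp add: neighbour_type_def partial_coding_def field_simps)

lemma cells_meet_iff:
  assumes "lam \<noteq> 0"
  shows "cell a n ` E \<inter> cell b n ` E \<noteq> {} \<longleftrightarrow> neighbour_type a b n \<in> difference_set"
proof -
  have "cell a n z = cell b n w \<longleftrightarrow> neighbour_type a b n = z - w" for z w
    using cell_diff[OF assms, of a n z b w] assms by auto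
  then show ?thesis
    unfolding difference_set_def by blast
qed

lemma neighbour_type_post_critical:
  assumes "lam \<noteq> 0" and a: "\<forall>n. a n \<in> D" and b: "\<forall>n. b n \<in> D"
    and "neighbour_type a b n \<in> difference_set"
  shows "neighbour_type a b n \<in> insert 0 ((\<lambda>(p, q). p - q) ` (post_critical_set \<times> post_critical_set))"
proof -
  obtain z w where zw: "z \<in> E" "w \<in> E" "neighbour_type a b n = z - w"
    using assms(4) unfolding difference_set_def by blast
  obtain g where g: "\<forall>n. g n \<in> D" "z = coding lam g" using zw(1) by (rule in_attractorE)
  obtain h where h: "\<forall>n. h n \<in> D" "w = coding lam h" using zw(2) by (rule in_attractorE)
  define A where "A = splice_seq a n g"
  define B where "B = splice_seq b n h"
  have A: "\<forall>n. A n \<in> D" and B: "\<forall>n. B n \<in> D"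
    unfolding A_def B_def using splice_seq_in a b g(1) h(1) by blast+
  have "coding lam A - coding lam B = lam ^ n * ((z - w) - neighbour_type a b n)"
    unfolding A_def B_def coding_splice_seq[OF a g(1)] coding_splice_seq[OF b h(1)]
    by (simp add: cell_diff[OF assms(1)] g(2) h(2))
  then have "coding lam A = coding lam B" using zw(3) by simp
  show ?thesis
  proof (cases "\<exists>i<n. A i \<noteq> B i")
    case True
    then obtain i where i: "i < n" "A i \<noteq> B i" "\<forall>j<i. A j = B j"
      by (rule first_difference)
    have "coding lam (shift_seq A i) \<in> overlap_set lam D"
      and "coding lam (shift_seq B i) \<in> overlap_set lam D"
      using overlap_at_first_difference[OF assms(1) A B \<open>coding lam A = coding lam B\<close> i(3,2)]
      by simp_all
    moreover have "shift_seq (shift_seq A i) (n - i) = g" "shift_seq (shift_seq B i) (n - i) = h"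
      using i(1) by (simp_all add: shift_seq_shift_seq A_def B_def shift_seq_splice_seq)
    ultimately have "z \<in> post_critical_set" "w \<in> post_critical_set"
      using shift_coding_in_post_critical_set[OF shift_seq_in[OF A]]
        shift_coding_in_post_critical_set[OF shift_seq_in[OF B]] g(2) h(2) by metis+
    then show ?thesis using zw(3) by force
  next
    case False
    then have "partial_coding a n = partial_coding b n"
      by (simp add: A_def B_def splice_seq_def partial_coding_def)
    then show ?thesis by (simp add: neighbour_type_def)
  qed
qed

lemma disjoint_cells_separated:
  assumes "lam \<noteq> 0" and pcf: "post_critically_finite lam D" and "D \<noteq> {}"
  obtains c where "c > 0" and "\<And>n a b z w. \<forall>i. a i \<in> D \<Longrightarrow> \<forall>i. b i \<in> D \<Longrightarrow>
      neighbour_type a b n \<notin> difference_set \<Longrightarrow> z \<in> E \<Longrightarrow> w \<in> E \<Longrightarrow>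
      c * norm lam ^ n \<le> norm (cell a n z - cell b n w)"
proof -
  \<comment> \<open>By \<open>neighbour_type_Suc\<close>, \<open>T\<close> contains the neighbour types of all cells whose parents meet.\<close>
  define T where "T = (\<lambda>(s, e). (s + e) / lam) `
    (insert 0 ((\<lambda>(p, q). p - q) ` (post_critical_set \<times> post_critical_set)) \<times>
     (\<lambda>(d, d'). d - d') ` (D \<times> D))"
  have finite_T: "finite T"
    unfolding T_def using finite_post_critical_set[OF pcf \<open>lam \<noteq> 0\<close>] finite_digits by simp
  have "compact difference_set"
    unfolding difference_set_def using compact_differences[OF compact_attractor compact_attractor] .
  then have "\<exists>c>0. \<forall>t\<in>T - difference_set. \<forall>x\<in>difference_set. c \<le> dist t x"
    by (intro separate_compact_closed finite_imp_compact[OF finite_Diff[OF finite_T]]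
        compact_imp_closed) auto
  then obtain c where "c > 0"
    and c: "\<And>t x. t \<in> T - difference_set \<Longrightarrow> x \<in> difference_set \<Longrightarrow> c \<le> dist t x"
    by blast
  have "0 \<in> difference_set"
    using \<open>D \<noteq> {}\<close> coding_in_attractor[of "\<lambda>_. _"] unfolding difference_set_def by force
  have "c * norm lam ^ n \<le> norm (cell a n z - cell b n w)"
    if "\<forall>i. a i \<in> D" "\<forall>i. b i \<in> D" "neighbour_type a b n \<notin> difference_set" "z \<in> E" "w \<in> E"
    for n a b z w
    using that
  proof (induction n arbitrary: z w)
    case 0
    then show ?case using \<open>0 \<in> difference_set\<close> by (simp add: neighbour_type_def partial_coding_def)
  next
    case (Suc n)
    show ?case
    proof (cases "neighbour_type a b n \<in> difference_set")
      case True
      have "neighbour_type a b (Suc n) \<in> T"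
        using neighbour_type_post_critical[OF \<open>lam \<noteq> 0\<close> Suc.prems(1,2) True] Suc.prems(1,2)
        unfolding T_def neighbour_type_Suc[OF \<open>lam \<noteq> 0\<close>] by force
      moreover have "z - w \<in> difference_set"
        using Suc.prems(4,5) unfolding difference_set_def by blast
      ultimately have "c \<le> norm ((z - w) - neighbour_type a b (Suc n))"
        using c[of "neighbour_type a b (Suc n)" "z - w"] Suc.prems(3)
        by (simp add: dist_norm norm_minus_commute)
      then have "c * norm lam ^ Suc n \<le> norm ((z - w) - neighbour_type a b (Suc n)) * norm lam ^ Suc n"
        by (rule mult_right_mono) simp
      then show ?thesis
        by (simp add: cell_diff[OF \<open>lam \<noteq> 0\<close>] norm_mult norm_power mult.commute)
    next
      case False
      have "c * norm lam ^ Suc n \<le> c * norm lam ^ n"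
        using \<open>c > 0\<close> contraction by (simp add: mult_left_le_one_le)
      also have "\<dots> \<le> norm (cell a n (a n + lam * z) - cell b n (b n + lam * w))"
        using Suc.IH[OF Suc.prems(1,2) False] Suc.prems(1,2,4,5) digit_step_in_attractor by blast
      finally show ?thesis by (simp add: cell_Suc)
    qed
  qed
  then show ?thesis using that \<open>c > 0\<close> by blast
qed

lemma compact_cell_image: "compact (cell a n ` E)"
  unfolding cell_def
  by (intro compact_continuous_image continuous_intros compact_attractor)

lemma diameter_cell_image_le: "diameter (cell a n ` E) \<le> norm lam ^ n * diameter E"
proof (rule diameter_le)
  show "cell a n ` E \<noteq> {} \<or> 0 \<le> norm lam ^ n * diameter E"
    using diameter_ge_0[OF compact_imp_bounded[OF compact_attractor]] by simp
  fix x y assume "x \<in> cell a n ` E" "y \<in> cell a n ` E"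
  then obtain u v where uv: "u \<in> E" "v \<in> E" "x = cell a n u" "y = cell a n v" by blast
  have "x - y = lam ^ n * (u - v)"
    by (simp add: uv(3,4) cell_def algebra_simps)
  then have "norm (x - y) = norm lam ^ n * dist u v"
    by (simp add: dist_norm norm_mult norm_power)
  also have "\<dots> \<le> norm lam ^ n * diameter E"
    using diameter_bounded_bound[OF compact_imp_bounded[OF compact_attractor] uv(1,2)]
    by (simp add: mult_left_mono)
  finally show "norm (x - y) \<le> norm lam ^ n * diameter E" .
qed

lemma close_points_joined_by_cells:
  assumes "lam \<noteq> 0" "connected E" "z0 \<in> E" "z1 \<in> E"
    and sep: "\<And>a b z w. \<forall>i. a i \<in> D \<Longrightarrow> \<forall>i. b i \<in> D \<Longrightarrow>
      neighbour_type a b n \<notin> difference_set \<Longrightarrow> z \<in> E \<Longrightarrow> w \<in> E \<Longrightarrow>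
      c * norm lam ^ n \<le> norm (cell a n z - cell b n w)"
    and close: "dist z0 z1 < c * norm lam ^ n"
  obtains C where "C \<subseteq> E" "connected C" "z0 \<in> C" "z1 \<in> C"
    "diameter C \<le> 2 * norm lam ^ n * diameter E"
proof -
  obtain a where a: "\<forall>n. a n \<in> D" "z0 = coding lam a" using assms(3) by (rule in_attractorE)
  obtain b where b: "\<forall>n. b n \<in> D" "z1 = coding lam b" using assms(4) by (rule in_attractorE)
  let ?C = "cell a n ` E \<union> cell b n ` E"
  have "neighbour_type a b n \<in> difference_set"
  proof (rule ccontr)
    assume "neighbour_type a b n \<notin> difference_set"
    then have "c * norm lam ^ n \<le> dist z0 z1"
      using sep[OF a(1) b(1)] coding_in_attractor[OF shift_seq_in] a b
      by (simp add: dist_norm coding_eq_cell_shift[OF a(1), of n] coding_eq_cell_shift[OF b(1), of n])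
    then show False using close by simp
  qed
  then have meet: "cell a n ` E \<inter> cell b n ` E \<noteq> {}"
    using cells_meet_iff[OF \<open>lam \<noteq> 0\<close>] by blast
  have "connected (cell a n ` E)" "connected (cell b n ` E)"
    unfolding cell_def by (intro connected_continuous_image continuous_intros assms(2))+
  then have connected: "connected ?C" using meet by (intro connected_Un) auto
  have "?C \<subseteq> E" using cell_in_attractor a(1) b(1) by blast
  moreover note connected
  moreover have "z0 \<in> ?C" "z1 \<in> ?C" using coding_in_cell a b by blast+
  moreover have "diameter ?C \<le> 2 * norm lam ^ n * diameter E"
    using diameter_Un_le[OF compact_imp_bounded[OF compact_cell_image]
        compact_imp_bounded[OF compact_cell_image] meet]
      diameter_cell_image_le[of a n] diameter_cell_image_le[of b n] by linarith
  ultimately show ?thesis by (rule that)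
qed

lemma bounded_turning_attractor:
  assumes "lam \<noteq> 0" and "post_critically_finite lam D" and "connected E" and "D \<noteq> {}"
  shows "bounded_turning E"
proof -
  obtain c where "c > 0" and sep: "\<And>n a b z w. \<forall>i. a i \<in> D \<Longrightarrow> \<forall>i. b i \<in> D \<Longrightarrow>
      neighbour_type a b n \<notin> difference_set \<Longrightarrow> z \<in> E \<Longrightarrow> w \<in> E \<Longrightarrow>
      c * norm lam ^ n \<le> norm (cell a n z - cell b n w)"
    using disjoint_cells_separated[OF assms(1,2,4)] by blast
  define \<Delta> where "\<Delta> = diameter E"
  define L where "L = \<Delta> / c + 2 * \<Delta> / (c * norm lam)"
  have "\<Delta> \<ge> 0" unfolding \<Delta>_def by (rule diameter_ge_0[OF compact_imp_bounded[OF compact_attractor]])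
  have "\<exists>C\<subseteq>E. connected C \<and> z0 \<in> C \<and> z1 \<in> C \<and> diameter C \<le> L * dist z0 z1"
    if z: "z0 \<in> E" "z1 \<in> E" for z0 z1
  proof -
    consider "z0 = z1" | "c \<le> dist z0 z1" | "0 < dist z0 z1" "dist z0 z1 < c" by force
    then show ?thesis
    proof cases
      case 1
      then show ?thesis using z by (intro exI[of _ "{z0}"]) auto
    next
      case 2
      then have "\<Delta> \<le> \<Delta> / c * dist z0 z1"
        using \<open>c > 0\<close> \<open>\<Delta> \<ge> 0\<close> by (simp add: field_simps mult_left_mono)
      also have "\<dots> \<le> L * dist z0 z1"
        unfolding L_def using \<open>c > 0\<close> \<open>\<Delta> \<ge> 0\<close> assms(1) by (intro mult_right_mono) auto
      finally show ?thesis using z assms(3) unfolding \<Delta>_def by blast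
    next
      case 3
      obtain n where n: "c * norm lam ^ Suc n \<le> dist z0 z1" "dist z0 z1 < c * norm lam ^ n"
        using geometric_bracket[OF _ contraction 3] assms(1) by auto
      obtain C where C: "C \<subseteq> E" "connected C" "z0 \<in> C" "z1 \<in> C"
        "diameter C \<le> 2 * norm lam ^ n * \<Delta>"
        using close_points_joined_by_cells[OF assms(1,3) z sep n(2)] unfolding \<Delta>_def by blast
      have "norm lam ^ n \<le> dist z0 z1 / (c * norm lam)"
        using n(1) \<open>c > 0\<close> assms(1) by (simp add: field_simps)
      then have "2 * norm lam ^ n * \<Delta> \<le> 2 * (dist z0 z1 / (c * norm lam)) * \<Delta>"
        using \<open>\<Delta> \<ge> 0\<close> by (intro mult_right_mono) auto
      also have "\<dots> = 2 * \<Delta> / (c * norm lam) * dist z0 z1"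
        by simp
      also have "\<dots> \<le> L * dist z0 z1"
        unfolding L_def using \<open>c > 0\<close> \<open>\<Delta> \<ge> 0\<close> by (intro mult_right_mono) auto
      finally have "diameter C \<le> L * dist z0 z1" using C(5) by linarith
      then show ?thesis using C(1-4) by blast
    qed
  qed
  then show ?thesis unfolding bounded_turning_def by blast
qed

end

theorem corollary6p2:
  fixes lam :: complex and D :: "complex set" and m :: nat
  assumes "m \<ge> 2" and "finite D" and "card D = m"
    and "norm lam < 1"
    and "post_critically_finite lam D"
    and "connected (attractor lam D)"
  shows "bounded_turning (attractor lam D)"
proof -
  interpret digit_ifs lam D
    using assms(2,4) by unfold_locales
  have "card D \<ge> 2" using assms(1,3) by simp
  then have "D \<noteq> {}" "\<nexists>d. D = {d}" by auto
  moreover have "lam \<noteq> 0"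
  proof
    assume "lam = 0"
    then have "connected D" using assms(6) attractor_0 by simp
    then show False
      using connected_finite_iff_sing assms(2) \<open>D \<noteq> {}\<close> \<open>\<nexists>d. D = {d}\<close> by blast
  qed
  ultimately show ?thesis using bounded_turning_attractor assms(5,6) by blast
qed

end
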